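(* Let $\mathcal{A}=(A,\le,\otimes,e,\to)$ be a strong algebra whose multiplication has a left residual $\Rightarrow_A$ (i.e. $a\otimes b\le c$ iff $b\le a\Rightarrow_A c$ for all $a,b,c$) and which internalizes its closed monoidal structure, i.e. for all $a,b,c\in A$: \[ a\to b\le (c\otimes a)\to(c\otimes b)\quad\text{and}\quad (a\otimes b)\to c\le b\to(a\Rightarrow_A c). \] Then there exist a non-commutative spacetime $\mathcal{S}=(\mathscr{X},\nabla)$ and a map $i:A\to\mathscr{X}$ which is a strict monoidal order embedding satisfying $i(a\to b)=i(a)\to_{\mathcal{S}}i(b)$ for all $a,b\in A$.
   Context: A monoidal poset is a poset with a monoid structure whose multiplication is monotone in each argument. An implication on it is a function $\to:A^{op}\times A\to A$ (antitone in the first, monotone in the second argument) with $e\le a\to a$ and $(a\to b)\otimes(b\to c)\le a\to c$; a strong algebra is a monoidal poset with an implication. A quantale is a monoidal poset with all joins whose multiplication distributes over arbitrary joins in each argument. A non-commutative spacetime is $(\mathscr{X},\nabla)$ with $\mathscr{X}$ a quantale and $\nabla$ join preserving and oplax monoidal ($\nabla e\le e$, $\nabla(a\otimes b)\le\nabla a\otimes\nabla b$); its implication $\to_{\mathcal{S}}$ is characterized by $a\otimes\nabla b\le c$ iff $b\le a\to_{\mathcal{S}}c$. A strict monoidal order embedding is a map $i$ with $i(e)=e$, $i(a\otimes b)=i(a)\otimes i(b)$ and $a\le b\iff i(a)\le i(b)$. *)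

theory Defs
  imports Main
begin

text \<open>All structures are given by an explicit carrier set, order relation,
multiplication and unit, so that the (existentially quantified) quantale can
live on a carrier inside a fixed ambient type.\<close>

definition partial_order_on :: "'b set \<Rightarrow> ('b \<Rightarrow> 'b \<Rightarrow> bool) \<Rightarrow> bool" where
  "partial_order_on X le \<longleftrightarrow>
     (\<forall>a\<in>X. le a a) \<and>
     (\<forall>a\<in>X. \<forall>b\<in>X. le a b \<and> le b a \<longrightarrow> a = b) \<and>
     (\<forall>a\<in>X. \<forall>b\<in>X. \<forall>c\<in>X. le a b \<and> le b c \<longrightarrow> le a c)"

definition monoidal_poset ::
  "'b set \<Rightarrow> ('b \<Rightarrow> 'b \<Rightarrow> bool) \<Rightarrow> ('b \<Rightarrow> 'b \<Rightarrow> 'b) \<Rightarrow> 'b \<Rightarrow> bool" where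
  "monoidal_poset X le m e \<longleftrightarrow>
     partial_order_on X le \<and>
     e \<in> X \<and> (\<forall>a\<in>X. \<forall>b\<in>X. m a b \<in> X) \<and>
     (\<forall>a\<in>X. \<forall>b\<in>X. \<forall>c\<in>X. m (m a b) c = m a (m b c)) \<and>
     (\<forall>a\<in>X. m e a = a \<and> m a e = a) \<and>
     (\<forall>a\<in>X. \<forall>a'\<in>X. \<forall>b\<in>X. le a a' \<longrightarrow> le (m a b) (m a' b) \<and> le (m b a) (m b a'))"

definition strong_algebra ::
  "'b set \<Rightarrow> ('b \<Rightarrow> 'b \<Rightarrow> bool) \<Rightarrow> ('b \<Rightarrow> 'b \<Rightarrow> 'b) \<Rightarrow> 'b \<Rightarrow> ('b \<Rightarrow> 'b \<Rightarrow> 'b) \<Rightarrow> bool" where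
  "strong_algebra X le m e imp \<longleftrightarrow>
     monoidal_poset X le m e \<and>
     (\<forall>a\<in>X. \<forall>b\<in>X. imp a b \<in> X) \<and>
     (\<forall>a\<in>X. \<forall>a'\<in>X. \<forall>b\<in>X. le a a' \<longrightarrow> le (imp a' b) (imp a b)) \<and>
     (\<forall>a\<in>X. \<forall>b\<in>X. \<forall>b'\<in>X. le b b' \<longrightarrow> le (imp a b) (imp a b')) \<and>
     (\<forall>a\<in>X. le e (imp a a)) \<and>
     (\<forall>a\<in>X. \<forall>b\<in>X. \<forall>c\<in>X. le (m (imp a b) (imp b c)) (imp a c))"

definition is_join :: "'b set \<Rightarrow> ('b \<Rightarrow> 'b \<Rightarrow> bool) \<Rightarrow> 'b set \<Rightarrow> 'b \<Rightarrow> bool" where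
  "is_join X le S j \<longleftrightarrow> j \<in> X \<and> (\<forall>s\<in>S. le s j) \<and> (\<forall>u\<in>X. (\<forall>s\<in>S. le s u) \<longrightarrow> le j u)"

definition quantale ::
  "'b set \<Rightarrow> ('b \<Rightarrow> 'b \<Rightarrow> bool) \<Rightarrow> ('b \<Rightarrow> 'b \<Rightarrow> 'b) \<Rightarrow> 'b \<Rightarrow> bool" where
  "quantale X le m e \<longleftrightarrow>
     monoidal_poset X le m e \<and>
     (\<forall>S. S \<subseteq> X \<longrightarrow> (\<exists>j. is_join X le S j)) \<and>
     (\<forall>S a j. S \<subseteq> X \<longrightarrow> a \<in> X \<longrightarrow> is_join X le S j \<longrightarrow>
         is_join X le ((\<lambda>s. m a s) ` S) (m a j) \<and> is_join X le ((\<lambda>s. m s a) ` S) (m j a))"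

definition nc_spacetime ::
  "'b set \<Rightarrow> ('b \<Rightarrow> 'b \<Rightarrow> bool) \<Rightarrow> ('b \<Rightarrow> 'b \<Rightarrow> 'b) \<Rightarrow> 'b \<Rightarrow> ('b \<Rightarrow> 'b) \<Rightarrow> bool" where
  "nc_spacetime X le m e nabla \<longleftrightarrow>
     quantale X le m e \<and>
     (\<forall>a\<in>X. nabla a \<in> X) \<and>
     (\<forall>S j. S \<subseteq> X \<longrightarrow> is_join X le S j \<longrightarrow> is_join X le (nabla ` S) (nabla j)) \<and>
     le (nabla e) e \<and>
     (\<forall>a\<in>X. \<forall>b\<in>X. le (nabla (m a b)) (m (nabla a) (nabla b)))"

definition spacetime_imp ::
  "'b set \<Rightarrow> ('b \<Rightarrow> 'b \<Rightarrow> bool) \<Rightarrow> ('b \<Rightarrow> 'b \<Rightarrow> 'b) \<Rightarrow> ('b \<Rightarrow> 'b) \<Rightarrow> 'b \<Rightarrow> 'b \<Rightarrow> 'b" where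
  "spacetime_imp X le m nabla a c =
     (THE z. z \<in> X \<and> (\<forall>b\<in>X. le (m a (nabla b)) c \<longleftrightarrow> le b z))"

end

theory Submission
  imports Defs "HOL-Library.Countable"
begin

text \<open>The up-sets of \<open>A\<close>, ordered by reverse inclusion, form an ordered monoid under
\<open>V \<otimes> W = \<up>{v \<otimes> w}\<close>, into which \<open>a \<mapsto> \<up>a\<close> embeds \<open>A\<close>, and \<open>W \<mapsto> {t. e \<rightarrow> t \<in> W}\<close> is
an oplax endomorphism of it by the first internalization axiom and composition. Downsets of an ordered
monoid form a quantale (Day convolution), and an oplax endomorphism extends to a join
preserving oplax \<open>\<nabla>\<close>. Both internalization axioms together give
\<open>a \<rightarrow> b = e \<rightarrow> (a \<Rightarrow> b)\<close>, and this makes \<open>b \<in> \<up>a \<otimes> \<nabla>W\<close> equivalent to \<open>a \<rightarrow> b \<in> W\<close>, i.e.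
the spacetime implication of \<open>\<up>a\<close> and \<open>\<up>b\<close> is \<open>\<up>(a \<rightarrow> b)\<close>.
As the quantale has to consist of sets of lists over \<open>A\<close>, only the up-sets denoted by
expressions built from atoms, \<open>\<otimes>\<close> and \<open>\<nabla>\<close> are used; lists over \<open>A\<close> encode these
expressions.\<close>

datatype 'b expr = Atom 'b | Tensor "'b expr" "'b expr" | Nabla "'b expr"

instance expr :: (countable) countable
  by countable_datatype

primrec atoms :: "'b expr \<Rightarrow> 'b list" where
  "atoms (Atom a) = [a]"
| "atoms (Tensor s t) = atoms s @ atoms t"
| "atoms (Nabla s) = atoms s"

primrec fill :: "unit expr \<Rightarrow> 'b list \<Rightarrow> 'b expr" where
  "fill (Atom _) xs = Atom (hd xs)"
| "fill (Tensor s t) xs =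
     Tensor (fill s (take (length (atoms s)) xs)) (fill t (drop (length (atoms s)) xs))"
| "fill (Nabla s) xs = Nabla (fill s xs)"

lemma length_atoms_map_expr: "length (atoms (map_expr f t)) = length (atoms t)"
  by (induction t) auto

lemma fill_shape_atoms: "fill (map_expr (\<lambda>_. ()) t) (atoms t) = t"
  by (induction t) (auto simp: length_atoms_map_expr)

text \<open>The element type may be a singleton, so the shape of an expression and its
number of atoms are encoded in the length of the list, the atoms in its entries.\<close>
definition expr_of_list :: "'b list \<Rightarrow> 'b expr" where
  "expr_of_list w = (case prod_decode (length w) of (n, k) \<Rightarrow> fill (from_nat n) (take k w))"

lemma surj_expr_of_list: "surj expr_of_list"
proof (rule surjI)
  fix t :: "'b expr"
  let ?n = "to_nat (map_expr (\<lambda>_. ()) t)" and ?k = "length (atoms t)"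
  let ?w = "atoms t @ replicate (prod_encode (?n, ?k) - ?k) undefined"
  have "?k \<le> prod_encode (?n, ?k)"
    by (rule le_prod_encode_2)
  then have "length ?w = prod_encode (?n, ?k)"
    by simp
  then show "expr_of_list ?w = t"
    by (simp add: expr_of_list_def fill_shape_atoms)
qed

definition list_of_expr :: "'b expr \<Rightarrow> 'b list" where
  "list_of_expr = inv expr_of_list"

lemma expr_of_list_of_expr [simp]: "expr_of_list (list_of_expr t) = t"
  by (simp add: list_of_expr_def surj_f_inv_f surj_expr_of_list)

lemma spacetime_imp_eqI:
  assumes "partial_order_on X le" and "z \<in> X"
    and "\<And>b. b \<in> X \<Longrightarrow> le (m a (nabla b)) c \<longleftrightarrow> le b z"
  shows "spacetime_imp X le m nabla a c = z"
  unfolding spacetime_imp_def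
proof (rule the_equality)
  show "z \<in> X \<and> (\<forall>b\<in>X. le (m a (nabla b)) c \<longleftrightarrow> le b z)"
    using assms(2,3) by blast
next
  fix z' assume z': "z' \<in> X \<and> (\<forall>b\<in>X. le (m a (nabla b)) c \<longleftrightarrow> le b z')"
  have "le z' z" and "le z z'"
    using z' assms unfolding partial_order_on_def by blast+
  then show "z' = z"
    using z' assms unfolding partial_order_on_def by blast
qed

lemma is_join_subset_iff:
  assumes "\<Union>T \<in> X"
  shows "is_join X (\<subseteq>) T j \<longleftrightarrow> j = \<Union>T"
  using assms unfolding is_join_def by blast

locale preordered_monoid_oplax =
  fixes below :: "'i \<Rightarrow> 'i \<Rightarrow> bool" (infix "\<sqsubseteq>" 50)
    and mult :: "'i \<Rightarrow> 'i \<Rightarrow> 'i" (infixl "\<odot>" 70)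
    and one :: 'i
    and N :: "'i \<Rightarrow> 'i"
  assumes below_refl: "x \<sqsubseteq> x"
    and below_trans: "x \<sqsubseteq> y \<Longrightarrow> y \<sqsubseteq> z \<Longrightarrow> x \<sqsubseteq> z"
    and mult_mono: "x \<sqsubseteq> x' \<Longrightarrow> y \<sqsubseteq> y' \<Longrightarrow> x \<odot> y \<sqsubseteq> x' \<odot> y'"
    and assoc_below: "(x \<odot> y) \<odot> z \<sqsubseteq> x \<odot> (y \<odot> z)"
    and assoc_above: "x \<odot> (y \<odot> z) \<sqsubseteq> (x \<odot> y) \<odot> z"
    and one_mult_below: "one \<odot> x \<sqsubseteq> x"
    and below_one_mult: "x \<sqsubseteq> one \<odot> x"
    and mult_one_below: "x \<odot> one \<sqsubseteq> x"
    and below_mult_one: "x \<sqsubseteq> x \<odot> one"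
    and N_mono: "x \<sqsubseteq> y \<Longrightarrow> N x \<sqsubseteq> N y"
    and N_one: "N one \<sqsubseteq> one"
    and N_mult: "N (x \<odot> y) \<sqsubseteq> N x \<odot> N y"
begin

definition downsets :: "'i set set" where
  "downsets = {U. \<forall>x\<in>U. \<forall>y. y \<sqsubseteq> x \<longrightarrow> y \<in> U}"

definition down :: "'i \<Rightarrow> 'i set" where
  "down p = {x. x \<sqsubseteq> p}"

definition day :: "'i set \<Rightarrow> 'i set \<Rightarrow> 'i set" where
  "day U V = {x. \<exists>u\<in>U. \<exists>v\<in>V. x \<sqsubseteq> u \<odot> v}"

definition N_ext :: "'i set \<Rightarrow> 'i set" where
  "N_ext U = {x. \<exists>u\<in>U. x \<sqsubseteq> N u}"

lemma down_in_downsets: "down p \<in> downsets"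
  unfolding downsets_def down_def using below_trans by blast

lemma day_in_downsets: "day U V \<in> downsets"
  unfolding downsets_def day_def using below_trans by blast

lemma N_ext_in_downsets: "N_ext U \<in> downsets"
  unfolding downsets_def N_ext_def using below_trans by blast

lemma Union_in_downsets: "T \<subseteq> downsets \<Longrightarrow> \<Union>T \<in> downsets"
  unfolding downsets_def by blast

lemma is_join_downsets_iff: "T \<subseteq> downsets \<Longrightarrow> is_join downsets (\<subseteq>) T j \<longleftrightarrow> j = \<Union>T"
  by (simp add: is_join_subset_iff Union_in_downsets)

lemma is_join_downsets_image:
  assumes "\<And>U. f U \<in> downsets" and "f (\<Union>T) = \<Union>(f ` T)"
    and "T \<subseteq> downsets" and "is_join downsets (\<subseteq>) T j"
  shows "is_join downsets (\<subseteq>) (f ` T) (f j)"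
proof -
  have "f ` T \<subseteq> downsets"
    using assms(1) by blast
  then show ?thesis
    using assms(2-) by (simp add: is_join_downsets_iff)
qed

lemma day_mono: "U \<subseteq> U' \<Longrightarrow> V \<subseteq> V' \<Longrightarrow> day U V \<subseteq> day U' V'"
  unfolding day_def by blast

lemma day_left_nested: "day (day U V) W = {x. \<exists>u\<in>U. \<exists>v\<in>V. \<exists>w\<in>W. x \<sqsubseteq> (u \<odot> v) \<odot> w}"
proof -
  have "x \<sqsubseteq> (u \<odot> v) \<odot> w" if "x \<sqsubseteq> s \<odot> w" and "s \<sqsubseteq> u \<odot> v" for x s u v w
    using that below_trans mult_mono[OF _ below_refl] by blast
  then show ?thesis
    unfolding day_def using below_refl by blast
qed

lemma day_right_nested: "day U (day V W) = {x. \<exists>u\<in>U. \<exists>v\<in>V. \<exists>w\<in>W. x \<sqsubseteq> u \<odot> (v \<odot> w)}"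
proof -
  have "x \<sqsubseteq> u \<odot> (v \<odot> w)" if "x \<sqsubseteq> u \<odot> s" and "s \<sqsubseteq> v \<odot> w" for x s u v w
    using that below_trans mult_mono[OF below_refl] by blast
  then show ?thesis
    unfolding day_def using below_refl by blast
qed

lemma day_assoc: "day (day U V) W = day U (day V W)"
  unfolding day_left_nested day_right_nested
  by (blast intro: below_trans[OF _ assoc_below] below_trans[OF _ assoc_above])

lemma day_unit_left:
  assumes "U \<in> downsets"
  shows "day (down one) U = U"
proof
  have "x \<sqsubseteq> u" if "x \<sqsubseteq> o' \<odot> u" and "o' \<sqsubseteq> one" for x o' u
    using that below_trans mult_mono[OF _ below_refl] one_mult_below by blast
  then show "day (down one) U \<subseteq> U"
    using assms unfolding downsets_def day_def down_def by blast
  show "U \<subseteq> day (down one) U"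
    unfolding day_def down_def using below_refl below_one_mult by blast
qed

lemma day_unit_right:
  assumes "U \<in> downsets"
  shows "day U (down one) = U"
proof
  have "x \<sqsubseteq> u" if "x \<sqsubseteq> u \<odot> o'" and "o' \<sqsubseteq> one" for x o' u
    using that below_trans mult_mono[OF below_refl] mult_one_below by blast
  then show "day U (down one) \<subseteq> U"
    using assms unfolding downsets_def day_def down_def by blast
  show "U \<subseteq> day U (down one)"
    unfolding day_def down_def using below_refl below_mult_one by blast
qed

lemma day_Union_left: "day (\<Union>T) V = \<Union>((\<lambda>U. day U V) ` T)"
  unfolding day_def by blast

lemma day_Union_right: "day U (\<Union>T) = \<Union>((\<lambda>V. day U V) ` T)"
  unfolding day_def by blast

lemma N_ext_Union: "N_ext (\<Union>T) = \<Union>(N_ext ` T)"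
  unfolding N_ext_def by blast

lemma N_ext_down_one: "N_ext (down one) \<subseteq> down one"
  unfolding N_ext_def down_def using below_trans N_mono N_one by blast

lemma N_ext_day: "N_ext (day U V) \<subseteq> day (N_ext U) (N_ext V)"
proof -
  have "x \<sqsubseteq> N u \<odot> N v" if "x \<sqsubseteq> N s" and "s \<sqsubseteq> u \<odot> v" for x s u v
    using that below_trans N_mono N_mult by blast
  then show ?thesis
    unfolding N_ext_def day_def using below_refl by blast
qed

theorem quantale_downsets: "quantale downsets (\<subseteq>) day (down one)"
proof -
  have "partial_order_on downsets (\<subseteq>)"
    unfolding partial_order_on_def by blast
  then have "monoidal_poset downsets (\<subseteq>) day (down one)"
    by (simp add: monoidal_poset_def down_in_downsets day_in_downsets day_assoc
        day_unit_left day_unit_right day_mono)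
  moreover have "is_join downsets (\<subseteq>) ((\<lambda>V. day U V) ` T) (day U j)"
    and "is_join downsets (\<subseteq>) ((\<lambda>V. day V U) ` T) (day j U)"
    if "T \<subseteq> downsets" and "is_join downsets (\<subseteq>) T j" for T U j
    using that day_Union_left day_Union_right
    by (auto intro!: is_join_downsets_image day_in_downsets)
  ultimately show ?thesis
    unfolding quantale_def by (auto simp: is_join_downsets_iff)
qed

theorem nc_spacetime_downsets: "nc_spacetime downsets (\<subseteq>) day (down one) N_ext"
proof -
  have "is_join downsets (\<subseteq>) (N_ext ` T) (N_ext j)"
    if "T \<subseteq> downsets" and "is_join downsets (\<subseteq>) T j" for T j
    using that by (rule is_join_downsets_image[OF N_ext_in_downsets N_ext_Union])
  then show ?thesis
    unfolding nc_spacetime_def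
    using quantale_downsets N_ext_in_downsets N_ext_down_one N_ext_day by blast
qed

lemma down_subset_down_iff: "down p \<subseteq> down q \<longleftrightarrow> p \<sqsubseteq> q"
  unfolding down_def using below_refl below_trans by blast

lemma day_down_down: "day (down p) (down q) = down (p \<odot> q)"
  unfolding day_def down_def by (blast intro: below_refl below_trans mult_mono)

lemma day_down_N_ext_subset_down_iff:
  "day (down p) (N_ext U) \<subseteq> down q \<longleftrightarrow> (\<forall>u\<in>U. p \<odot> N u \<sqsubseteq> q)"
  unfolding day_def down_def N_ext_def by (blast intro: below_refl below_trans mult_mono)

lemma spacetime_imp_down:
  assumes "\<And>u. p \<odot> N u \<sqsubseteq> q \<longleftrightarrow> u \<sqsubseteq> c"
  shows "spacetime_imp downsets (\<subseteq>) day N_ext (down p) (down q) = down c"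
proof (rule spacetime_imp_eqI)
  show "partial_order_on downsets (\<subseteq>)"
    unfolding partial_order_on_def by blast
  show "down c \<in> downsets"
    by (rule down_in_downsets)
  show "day (down p) (N_ext U) \<subseteq> down q \<longleftrightarrow> U \<subseteq> down c" for U
    using assms by (simp add: day_down_N_ext_subset_down_iff) (auto simp: down_def)
qed

end

locale internally_closed_strong_algebra =
  fixes le :: "'a \<Rightarrow> 'a \<Rightarrow> bool" (infix "\<preceq>" 50)
    and m :: "'a \<Rightarrow> 'a \<Rightarrow> 'a" (infixl "\<otimes>" 70)
    and e :: 'a
    and imp :: "'a \<Rightarrow> 'a \<Rightarrow> 'a"
    and res :: "'a \<Rightarrow> 'a \<Rightarrow> 'a"
  assumes strong: "strong_algebra UNIV le m e imp"
    and residual: "a \<otimes> b \<preceq> c \<longleftrightarrow> b \<preceq> res a c"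
    and imp_mult_left: "imp a b \<preceq> imp (c \<otimes> a) (c \<otimes> b)"
    and imp_mult_res: "imp (a \<otimes> b) c \<preceq> imp b (res a c)"
begin

lemma partial_order_UNIV: "partial_order_on UNIV le"
  using strong unfolding strong_algebra_def monoidal_poset_def by (elim conjE)

lemma le_refl: "a \<preceq> a"
  and le_antisym: "a \<preceq> b \<Longrightarrow> b \<preceq> a \<Longrightarrow> a = b"
  and le_trans: "a \<preceq> b \<Longrightarrow> b \<preceq> c \<Longrightarrow> a \<preceq> c"
  using partial_order_UNIV unfolding partial_order_on_def by blast+

lemma m_assoc: "a \<otimes> b \<otimes> c = a \<otimes> (b \<otimes> c)"
  and unit_left: "e \<otimes> a = a"
  and unit_right: "a \<otimes> e = a"
  and m_mono_left: "a \<preceq> a' \<Longrightarrow> a \<otimes> b \<preceq> a' \<otimes> b"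
  and m_mono_right: "b \<preceq> b' \<Longrightarrow> a \<otimes> b \<preceq> a \<otimes> b'"
  using strong by (simp_all add: strong_algebra_def monoidal_poset_def)

lemma imp_mono_right: "b \<preceq> b' \<Longrightarrow> imp a b \<preceq> imp a b'"
  and e_le_imp_self: "e \<preceq> imp a a"
  and imp_comp: "imp a b \<otimes> imp b c \<preceq> imp a c"
  using strong unfolding strong_algebra_def by blast+

lemma m_res_le: "a \<otimes> res a b \<preceq> b"
  using residual le_refl by blast

lemma imp_e_m_le: "imp e s \<otimes> imp e t \<preceq> imp e (s \<otimes> t)"
proof -
  have "imp e t \<preceq> imp s (s \<otimes> t)"
    using imp_mult_left[of e t s] by (simp add: unit_right)
  then have "imp e s \<otimes> imp e t \<preceq> imp e s \<otimes> imp s (s \<otimes> t)"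
    by (rule m_mono_right)
  then show ?thesis
    using imp_comp le_trans by blast
qed

lemma imp_eq_imp_e_res: "imp a b = imp e (res a b)"
proof (rule le_antisym)
  show "imp a b \<preceq> imp e (res a b)"
    using imp_mult_res[of a e b] by (simp add: unit_right)
  have "imp e (res a b) \<preceq> imp a (a \<otimes> res a b)"
    using imp_mult_left[of e "res a b" a] by (simp add: unit_right)
  then show "imp e (res a b) \<preceq> imp a b"
    using imp_mono_right[OF m_res_le] le_trans by blast
qed

definition upset :: "'a set \<Rightarrow> bool" where
  "upset W \<longleftrightarrow> (\<forall>x\<in>W. \<forall>y. x \<preceq> y \<longrightarrow> y \<in> W)"

definition up :: "'a \<Rightarrow> 'a set" where
  "up a = {x. a \<preceq> x}"

definition tensor_up :: "'a set \<Rightarrow> 'a set \<Rightarrow> 'a set" where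
  "tensor_up V W = {x. \<exists>v\<in>V. \<exists>w\<in>W. v \<otimes> w \<preceq> x}"

definition nabla_up :: "'a set \<Rightarrow> 'a set" where
  "nabla_up W = {t. imp e t \<in> W}"

lemma upset_up: "upset (up a)"
  unfolding upset_def up_def using le_trans by blast

lemma upset_tensor_up: "upset (tensor_up V W)"
  unfolding upset_def tensor_up_def using le_trans by blast

lemma upset_nabla_up: "upset W \<Longrightarrow> upset (nabla_up W)"
  unfolding upset_def nabla_up_def using imp_mono_right by blast

lemma up_subset_iff: "upset W \<Longrightarrow> up a \<subseteq> W \<longleftrightarrow> a \<in> W"
  unfolding upset_def up_def using le_refl by blast

lemma up_subset_up_iff: "up a \<subseteq> up b \<longleftrightarrow> b \<preceq> a"
  by (simp add: up_subset_iff upset_up) (simp add: up_def)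

lemma tensor_up_mono: "V \<subseteq> V' \<Longrightarrow> W \<subseteq> W' \<Longrightarrow> tensor_up V W \<subseteq> tensor_up V' W'"
  unfolding tensor_up_def by blast

lemma tensor_up_assoc: "tensor_up (tensor_up U V) W = tensor_up U (tensor_up V W)"
proof -
  have "tensor_up (tensor_up U V) W = {x. \<exists>u\<in>U. \<exists>v\<in>V. \<exists>w\<in>W. u \<otimes> v \<otimes> w \<preceq> x}"
  proof -
    have "u \<otimes> v \<otimes> w \<preceq> x" if "u \<otimes> v \<preceq> s" and "s \<otimes> w \<preceq> x" for u v w s x
      using that m_mono_left le_trans by blast
    then show ?thesis
      unfolding tensor_up_def using le_refl by blast
  qed
  moreover have "tensor_up U (tensor_up V W) = {x. \<exists>u\<in>U. \<exists>v\<in>V. \<exists>w\<in>W. u \<otimes> (v \<otimes> w) \<preceq> x}"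
  proof -
    have "u \<otimes> (v \<otimes> w) \<preceq> x" if "v \<otimes> w \<preceq> s" and "u \<otimes> s \<preceq> x" for u v w s x
      using that m_mono_right le_trans by blast
    then show ?thesis
      unfolding tensor_up_def using le_refl by blast
  qed
  ultimately show ?thesis
    by (simp add: m_assoc)
qed

lemma tensor_up_e_left:
  assumes "upset W"
  shows "tensor_up (up e) W = W"
proof
  have "w \<preceq> x" if "e \<preceq> v" and "v \<otimes> w \<preceq> x" for v w x
    using m_mono_left[OF that(1), of w] that(2) le_trans by (simp add: unit_left)
  then show "tensor_up (up e) W \<subseteq> W"
    using assms unfolding upset_def tensor_up_def up_def by blast
  show "W \<subseteq> tensor_up (up e) W"
    unfolding tensor_up_def up_def using le_refl by (force simp: unit_left)
qed

lemma tensor_up_e_right: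
  assumes "upset W"
  shows "tensor_up W (up e) = W"
proof
  have "w \<preceq> x" if "e \<preceq> v" and "w \<otimes> v \<preceq> x" for v w x
    using m_mono_right[OF that(1), of w] that(2) le_trans by (simp add: unit_right)
  then show "tensor_up W (up e) \<subseteq> W"
    using assms unfolding upset_def tensor_up_def up_def by blast
  show "W \<subseteq> tensor_up W (up e)"
    unfolding tensor_up_def up_def using le_refl by (force simp: unit_right)
qed

lemma tensor_up_up: "tensor_up (up a) (up b) = up (a \<otimes> b)"
proof -
  have "a \<otimes> b \<preceq> x" if "a \<preceq> a'" and "b \<preceq> b'" and "a' \<otimes> b' \<preceq> x" for a' b' x
    using that m_mono_left m_mono_right le_trans by meson
  then show ?thesis
    unfolding tensor_up_def up_def using le_refl by blast
qed

lemma nabla_up_mono: "V \<subseteq> W \<Longrightarrow> nabla_up V \<subseteq> nabla_up W"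
  unfolding nabla_up_def by blast

lemma up_e_subset_nabla_up: "up e \<subseteq> nabla_up (up e)"
  unfolding up_def nabla_up_def using e_le_imp_self imp_mono_right le_trans by blast

lemma tensor_up_nabla_up: "tensor_up (nabla_up V) (nabla_up W) \<subseteq> nabla_up (tensor_up V W)"
  unfolding tensor_up_def nabla_up_def
  using imp_e_m_le imp_mono_right le_trans by blast

lemma mem_tensor_up_nabla_up_iff:
  assumes "upset W"
  shows "b \<in> tensor_up (up a) (nabla_up W) \<longleftrightarrow> imp a b \<in> W"
proof
  assume "b \<in> tensor_up (up a) (nabla_up W)"
  then obtain a' t where "a \<preceq> a'" and t: "imp e t \<in> W" and "a' \<otimes> t \<preceq> b"
    unfolding tensor_up_def up_def nabla_up_def by blast
  then have "a \<otimes> t \<preceq> b"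
    using le_trans[OF m_mono_left] by blast
  then have "imp e t \<preceq> imp e (res a b)"
    unfolding residual by (rule imp_mono_right)
  with t assms show "imp a b \<in> W"
    unfolding upset_def imp_eq_imp_e_res[of a b] by blast
next
  assume "imp a b \<in> W"
  then have "res a b \<in> nabla_up W"
    unfolding nabla_up_def imp_eq_imp_e_res[of a b] by simp
  then show "b \<in> tensor_up (up a) (nabla_up W)"
    unfolding tensor_up_def up_def using le_refl m_res_le by blast
qed

primrec sem :: "'a expr \<Rightarrow> 'a set" where
  "sem (Atom a) = up a"
| "sem (Tensor s t) = tensor_up (sem s) (sem t)"
| "sem (Nabla s) = nabla_up (sem s)"

lemma upset_sem: "upset (sem t)"
  by (induction t) (simp_all add: upset_up upset_tensor_up upset_nabla_up)

definition den :: "'a list \<Rightarrow> 'a set" where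
  "den r = sem (expr_of_list r)"

lemma den_list_of_expr [simp]: "den (list_of_expr t) = sem t"
  by (simp add: den_def)

lemma upset_den: "upset (den r)"
  by (simp add: den_def upset_sem)

sublocale idx: preordered_monoid_oplax "\<lambda>r s. den s \<subseteq> den r"
  "\<lambda>r s. list_of_expr (Tensor (expr_of_list r) (expr_of_list s))" "list_of_expr (Atom e)"
  "\<lambda>r. list_of_expr (Nabla (expr_of_list r))"
  by unfold_locales
    (simp_all add: den_def[symmetric] tensor_up_assoc tensor_up_e_left tensor_up_e_right upset_den
      up_e_subset_nabla_up tensor_up_nabla_up tensor_up_mono nabla_up_mono)

definition embed :: "'a \<Rightarrow> 'a list set" where
  "embed a = idx.down (list_of_expr (Atom a))"

lemma embed_in_downsets: "embed a \<in> idx.downsets"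
  unfolding embed_def by (rule idx.down_in_downsets)

lemma embed_m: "embed (a \<otimes> b) = idx.day (embed a) (embed b)"
  unfolding embed_def idx.day_down_down by (simp add: idx.down_def tensor_up_up)

lemma le_iff_embed_subset: "a \<preceq> b \<longleftrightarrow> embed a \<subseteq> embed b"
  unfolding embed_def idx.down_subset_down_iff by (simp add: up_subset_up_iff)

lemma embed_imp:
  "embed (imp a b) = spacetime_imp idx.downsets (\<subseteq>) idx.day idx.N_ext (embed a) (embed b)"
  unfolding embed_def
  by (rule idx.spacetime_imp_down[symmetric])
    (simp add: den_def[symmetric] up_subset_iff upset_tensor_up upset_den
      mem_tensor_up_nabla_up_iff)

end

theorem theorem6p2:
  fixes le :: "'a \<Rightarrow> 'a \<Rightarrow> bool" and m :: "'a \<Rightarrow> 'a \<Rightarrow> 'a" and e :: 'a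
    and imp :: "'a \<Rightarrow> 'a \<Rightarrow> 'a" and res :: "'a \<Rightarrow> 'a \<Rightarrow> 'a"
  assumes strong: "strong_algebra UNIV le m e imp"
    and residual: "\<And>a b c. le (m a b) c \<longleftrightarrow> le b (res a c)"
    and int1: "\<And>a b c. le (imp a b) (imp (m c a) (m c b))"
    and int2: "\<And>a b c. le (imp (m a b) c) (imp b (res a c))"
  shows "\<exists>(X :: 'a list set set) leX mX eX nabla (i :: 'a \<Rightarrow> 'a list set).
           nc_spacetime X leX mX eX nabla \<and>
           (\<forall>a. i a \<in> X) \<and>
           i e = eX \<and>
           (\<forall>a b. i (m a b) = mX (i a) (i b)) \<and>
           (\<forall>a b. le a b \<longleftrightarrow> leX (i a) (i b)) \<and>
           (\<forall>a b. i (imp a b) = spacetime_imp X leX mX nabla (i a) (i b))"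
proof -
  interpret internally_closed_strong_algebra le m e imp res
    using assms by unfold_locales
  have "nc_spacetime idx.downsets (\<subseteq>) idx.day (embed e) idx.N_ext"
    unfolding embed_def by (rule idx.nc_spacetime_downsets)
  moreover have "\<forall>a. embed a \<in> idx.downsets"
    using embed_in_downsets by blast
  moreover have "\<forall>a b. embed (m a b) = idx.day (embed a) (embed b)"
    using embed_m by blast
  moreover have "\<forall>a b. le a b \<longleftrightarrow> embed a \<subseteq> embed b"
    using le_iff_embed_subset by blast
  moreover have "\<forall>a b. embed (imp a b) =
      spacetime_imp idx.downsets (\<subseteq>) idx.day idx.N_ext (embed a) (embed b)"
    using embed_imp by blast
  ultimately show ?thesis
    by blast
qed

end
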